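(* Let $G\subsetneq\mathbb{R}^n$ be a domain and let $p\ge 1$. Then for all points $z_1,z_2\in G$, \[ s_G(z_1,z_2)\le b_{G,p}(z_1,z_2)\le 2^{1-1/p}\,s_G(z_1,z_2). \]
   Context: For a domain $G\subsetneq\mathbb{R}^n$, $p\ge1$ and $z_1,z_2\in G$, the Barrlund metric is \[ b_{G,p}(z_1,z_2)=\sup_{z\in\partial G}\frac{|z_1-z_2|}{\sqrt[p]{|z_1-z|^p+|z-z_2|^p}}, \] and the triangular ratio metric is $s_G(z_1,z_2)=b_{G,1}(z_1,z_2)=\sup_{z\in\partial G}\frac{|z_1-z_2|}{|z_1-z|+|z-z_2|}$. *)

theory Defs
  imports "HOL-Analysis.Analysis"
begin

definition barrlund :: "'a::euclidean_space set \<Rightarrow> real \<Rightarrow> 'a \<Rightarrow> 'a \<Rightarrow> real" where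
  "barrlund G p z1 z2 =
     (SUP z\<in>frontier G. dist z1 z2 / ((dist z1 z powr p + dist z z2 powr p) powr (1 / p)))"

definition triangular_ratio :: "'a::euclidean_space set \<Rightarrow> 'a \<Rightarrow> 'a \<Rightarrow> real" where
  "triangular_ratio G z1 z2 = (SUP z\<in>frontier G. dist z1 z2 / (dist z1 z + dist z z2))"

end

theory Submission
  imports Defs
begin

text \<open>Both metrics are suprema over the same boundary points, of the quotients
  \<open>|z\<^sub>1 - z\<^sub>2| / \<parallel>(a, b)\<parallel>\<^sub>1\<close> and \<open>|z\<^sub>1 - z\<^sub>2| / \<parallel>(a, b)\<parallel>\<^sub>p\<close> with \<open>a = |z\<^sub>1 - z|\<close>, \<open>b = |z - z\<^sub>2|\<close>.
  In the plane the norms satisfy \<open>\<parallel>v\<parallel>\<^sub>p \<le> \<parallel>v\<parallel>\<^sub>1 \<le> 2\<^bsup>1-1/p\<^esup> \<parallel>v\<parallel>\<^sub>p\<close>, the second inequality being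
  Jensen's inequality for the convex function \<open>t\<^sup>p\<close>; these pointwise bounds pass to the suprema.\<close>

lemma powr_sum_root_le_add:
  fixes a b p :: real
  assumes "a \<ge> 0" "b \<ge> 0" "p \<ge> 1"
  shows "(a powr p + b powr p) powr (1 / p) \<le> a + b"
proof -
  have split: "x powr p = x * x powr (p - 1)" if "x \<ge> 0" for x :: real
    using that assms by (cases "x = 0") (simp_all add: powr_diff)
  have le: "x powr p \<le> x * (a + b) powr (p - 1)" if "x \<ge> 0" "x \<le> a + b" for x
    using that assms by (simp add: split mult_left_mono powr_mono2)
  have "a powr p + b powr p \<le> a * (a + b) powr (p - 1) + b * (a + b) powr (p - 1)"
    using assms by (intro add_mono le) auto
  also have "\<dots> = (a + b) * (a + b) powr (p - 1)"
    by (simp add: distrib_right)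
  also have "\<dots> = (a + b) powr p"
    using assms by (simp add: split)
  finally have "(a powr p + b powr p) powr (1 / p) \<le> ((a + b) powr p) powr (1 / p)"
    using assms by (intro powr_mono2) auto
  also have "\<dots> = a + b"
    using assms by (simp add: powr_powr)
  finally show ?thesis .
qed

lemma add_le_two_powr_mult_powr_sum_root:
  fixes a b p :: real
  assumes "a > 0" "b > 0" "p \<ge> 1"
  shows "a + b \<le> 2 powr (1 - 1 / p) * (a powr p + b powr p) powr (1 / p)"
proof -
  have "((1 - 1/2) *\<^sub>R a + (1/2) *\<^sub>R b) powr p \<le> (1 - 1/2) * a powr p + (1/2) * b powr p"
    using convex_onD[OF powr_convex[OF assms(3)], of "1/2" a b] assms by auto
  then have jensen: "((a + b) / 2) powr p \<le> (a powr p + b powr p) / 2"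
    by (simp add: field_simps)
  have "(a + b) / 2 = (((a + b) / 2) powr p) powr (1 / p)"
    using assms by (simp add: powr_powr)
  also have "\<dots> \<le> ((a powr p + b powr p) / 2) powr (1 / p)"
    using assms jensen by (intro powr_mono2) auto
  also have "\<dots> = (a powr p + b powr p) powr (1 / p) / 2 powr (1 / p)"
    using assms by (simp add: powr_divide)
  finally have "a + b \<le> 2 * (a powr p + b powr p) powr (1 / p) / 2 powr (1 / p)"
    by (simp add: field_simps)
  also have "\<dots> = 2 powr (1 - 1 / p) * (a powr p + b powr p) powr (1 / p)"
    by (simp add: powr_diff)
  finally show ?thesis .
qed

lemma divide_add_le_divide_powr_sum_root:
  fixes a b d p :: real
  assumes "a > 0" "b > 0" "d \<ge> 0" "p \<ge> 1"
  shows "d / (a + b) \<le> d / (a powr p + b powr p) powr (1 / p)"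
    and "d / (a powr p + b powr p) powr (1 / p) \<le> 2 powr (1 - 1 / p) * (d / (a + b))"
proof -
  let ?M = "(a powr p + b powr p) powr (1 / p)"
  have "a powr p + b powr p > 0"
    using assms by (intro add_pos_pos) auto
  then have M_pos: "?M > 0"
    by simp
  show "d / (a + b) \<le> d / ?M"
    using assms M_pos powr_sum_root_le_add[of a b p] by (intro divide_left_mono) auto
  have "d * (a + b) \<le> d * (2 powr (1 - 1 / p) * ?M)"
    using assms add_le_two_powr_mult_powr_sum_root[of a b p] by (intro mult_left_mono) auto
  then show "d / ?M \<le> 2 powr (1 - 1 / p) * (d / (a + b))"
    using assms M_pos by (simp add: field_simps)
qed

lemma cSUP_le_cSUP_le_mult_cSUP:
  fixes f g :: "'a \<Rightarrow> real"
  assumes "A \<noteq> {}" "bdd_above (f ` A)" "c \<ge> 0"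
    and "\<And>x. x \<in> A \<Longrightarrow> f x \<le> g x" "\<And>x. x \<in> A \<Longrightarrow> g x \<le> c * f x"
  shows "(SUP x\<in>A. f x) \<le> (SUP x\<in>A. g x) \<and> (SUP x\<in>A. g x) \<le> c * (SUP x\<in>A. f x)"
proof
  have f_le_Sup: "f x \<le> (SUP x\<in>A. f x)" if "x \<in> A" for x
    using that assms(2) by (rule cSUP_upper)
  have g_le: "g x \<le> c * (SUP x\<in>A. f x)" if "x \<in> A" for x
    using assms(3,5) f_le_Sup that by (meson mult_left_mono order_trans)
  then have "bdd_above (g ` A)"
    by (intro bdd_aboveI2)
  then show "(SUP x\<in>A. f x) \<le> (SUP x\<in>A. g x)"
    using assms(1,4) by (intro cSUP_mono) auto
  show "(SUP x\<in>A. g x) \<le> c * (SUP x\<in>A. f x)"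
    using assms(1) g_le by (rule cSUP_least)
qed

lemma dist_frontier_pos:
  assumes "open G" "x \<in> G" "z \<in> frontier G"
  shows "dist x z > 0" "dist z x > 0"
  using assms frontier_disjoint_eq[of G] by auto

theorem theorem1p1:
  fixes G :: "'a::euclidean_space set" and p :: real and z1 z2 :: 'a
  assumes "open G" and "connected G" and "G \<noteq> {}" and "G \<noteq> UNIV"
    and "p \<ge> 1" and "z1 \<in> G" and "z2 \<in> G"
  shows "triangular_ratio G z1 z2 \<le> barrlund G p z1 z2
         \<and> barrlund G p z1 z2 \<le> 2 powr (1 - 1 / p) * triangular_ratio G z1 z2"
proof -
  have frontier_ne: "frontier G \<noteq> {}"
    using frontier_not_empty assms(3,4) by blast
  have dist_pos: "dist z1 z > 0" "dist z z2 > 0" if "z \<in> frontier G" for z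
    using dist_frontier_pos assms(1,6,7) that by blast+
  have "dist z1 z2 / (dist z1 z + dist z z2) \<le> 1" if "z \<in> frontier G" for z
    using dist_pos[OF that] dist_triangle[of z1 z2 z] by (simp add: divide_le_eq_1 add_pos_pos)
  then have "bdd_above ((\<lambda>z. dist z1 z2 / (dist z1 z + dist z z2)) ` frontier G)"
    by (intro bdd_aboveI2)
  then show ?thesis
    unfolding triangular_ratio_def barrlund_def
    using frontier_ne dist_pos assms(5)
    by (intro cSUP_le_cSUP_le_mult_cSUP divide_add_le_divide_powr_sum_root) auto
qed

end
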